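(* Let $\mathbf{F}$ be a finite field with $q$ elements, $k$ a field in which $q$ is nonzero, and $0\le r\le n$. An element $u\in\mathfrak{a}_{n,r}$ is the unit (two-sided identity element) of $\mathfrak{a}_{n,r}$ if and only if both of the following hold: (a) $[g^{-1}]\,u\,[g]=u$ in $k[\mathfrak{M}_n]$ for every $g\in\mathbf{GL}_n(\mathbf{F})$; (b) $u\cdot[e_{n,r}]=[e_{n,r}]$, where $e_{n,r}=\begin{pmatrix}I_r&\\&0_{n-r}\end{pmatrix}$.
   Context: $\mathfrak{M}_n$ is the monoid of $n\times n$ matrices over $\mathbf{F}$; $k[\mathfrak{M}_n]$ its monoid algebra with basis $[m]$. $\mathfrak{a}_{n,r}$ is the two-sided ideal spanned by $[m]$ with $\operatorname{rank}m\le r$. *)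

theory Defs
  imports "Jordan_Normal_Form.DL_Rank"
begin

text \<open>Monoid algebra k[M_n] of the monoid M_n of n x n matrices over a field 'f,
  represented as functions from matrices to k vanishing outside carrier_mat n n.\<close>

definition monalg :: "nat \<Rightarrow> ('f::field mat \<Rightarrow> 'k::field) set" where
  "monalg n = {u. \<forall>m. m \<notin> carrier_mat n n \<longrightarrow> u m = 0}"

definition monalg_mult :: "nat \<Rightarrow> ('f::field mat \<Rightarrow> 'k::field) \<Rightarrow> ('f mat \<Rightarrow> 'k) \<Rightarrow> ('f mat \<Rightarrow> 'k)" where
  "monalg_mult n u v = (\<lambda>m. if m \<in> carrier_mat n n then
      (\<Sum>p\<in>{(a, b). a \<in> carrier_mat n n \<and> b \<in> carrier_mat n n \<and> a * b = m}. u (fst p) * v (snd p))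
    else 0)"

definition monalg_basis :: "'f::field mat \<Rightarrow> ('f mat \<Rightarrow> 'k::field)" where
  "monalg_basis m = (\<lambda>x. if x = m then 1 else 0)"

definition rank_ideal :: "nat \<Rightarrow> nat \<Rightarrow> ('f::field mat \<Rightarrow> 'k::field) set" where
  "rank_ideal n r = {u \<in> monalg n. \<forall>m. u m \<noteq> 0 \<longrightarrow> vec_space.rank n m \<le> r}"

definition e_mat :: "nat \<Rightarrow> nat \<Rightarrow> 'f::field mat" where
  "e_mat n r = mat n n (\<lambda>(i, j). if i = j \<and> i < r then 1 else 0)"

definition is_unit_of :: "nat \<Rightarrow> ('f::field mat \<Rightarrow> 'k::field) set \<Rightarrow> ('f mat \<Rightarrow> 'k) \<Rightarrow> bool" where
  "is_unit_of n A u \<longleftrightarrow> u \<in> A \<and> (\<forall>v\<in>A. monalg_mult n u v = v \<and> monalg_mult n v u = v)"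

end

(*
  If u is the unit of the ideal, then so is [g^-1] u [g] (the ideal is two-sided), hence
  they are equal; and u fixes [e_{n,r}] because e_{n,r} has rank r.

  Conversely, row reduction writes any m of rank at most r as m = Q R with Q invertible
  and e_{n,r} R = R.  By (a) u commutes with [Q], so u [m] = [Q] u [e_{n,r}] [R] = [m] by (b),
  and u is a left identity of the ideal.  Transposition of matrices induces an
  anti-automorphism of k[M_n] preserving the ideal, so the transpose of u is a right
  identity, and a left and a right identity coincide.
*)

theory Submission
  imports Defs
begin

section \<open>Rank and row echelon forms\<close>

context vec_space begin

lemma rank_le_rank_if_cols_subset_span:
  assumes A: "A \<in> carrier_mat n nc" and B: "B \<in> carrier_mat n nc'"
    and sub: "set (cols A) \<subseteq> span (set (cols B))"
  shows "rank A \<le> rank B"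
proof -
  define W where "W = span (set (cols B))"
  have W: "subspace class_ring W V"
    unfolding W_def using B cols_dim carrier_matD(1) span_is_subspace by blast
  have SA: "subspace class_ring (span (set (cols A))) V"
    using A cols_dim carrier_matD(1) span_is_subspace by blast
  have "span (set (cols A)) \<subseteq> W"
    using sub W unfolding W_def by (simp add: span_is_subset subspace_def)
  then have "subspace class_ring (span (set (cols A))) (vs W)"
    using nested_subspaces[OF W SA] by blast
  moreover have "vectorspace.fin_dim class_ring (vs W)"
    unfolding W_def using B fin_dim_span_cols by blast
  moreover have "vectorspace.fin_dim class_ring (span_vs (set (cols A)))"
    using A fin_dim_span_cols by blast
  ultimately have "rank A \<le> vectorspace.dim class_ring (vs W)"
    unfolding rank_def using vectorspace.subspace_dim[OF subspace_is_vs[OF W]] by auto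
  then show ?thesis unfolding rank_def W_def .
qed

lemma rank_mat_mult_le_left:
  assumes A: "A \<in> carrier_mat n nc" and B: "B \<in> carrier_mat nc nc'"
  shows "rank (A * B) \<le> rank A"
proof (rule rank_le_rank_if_cols_subset_span[OF _ A])
  show "A * B \<in> carrier_mat n nc'" using A B by auto
  show "set (cols (A * B)) \<subseteq> span (set (cols A))"
  proof
    fix x assume "x \<in> set (cols (A * B))"
    then obtain j where j: "j < nc'" "x = col (A * B) j"
      using A B by (auto simp: cols_def)
    then have "x = A *\<^sub>v col B j" using col_mult2[OF A B j(1)] by simp
    then show "x \<in> span (set (cols A))"
      using col_space_eq[OF A] A B j(1) unfolding col_space_def by auto
  qed
qed

lemma cols_subset_span_maximal_lin_indpt:
  assumes B: "B \<in> carrier_mat n nc"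
    and max: "maximal S (\<lambda>T. T \<subseteq> set (cols B) \<and> lin_indpt T)"
  shows "set (cols B) \<subseteq> span S"
proof
  fix s assume s: "s \<in> set (cols B)"
  have SB: "S \<subseteq> set (cols B)" and li: "lin_indpt S" using max unfolding maximal_def by auto
  have V: "set (cols B) \<subseteq> carrier_vec n" using B cols_dim by blast
  show "s \<in> span S"
  proof (rule ccontr)
    assume s_span: "s \<notin> span S"
    then have "s \<notin> S" using in_own_span SB V by blast
    then have "lin_indpt (insert s S)"
      using lin_dep_iff_in_span[of S s] li s_span s SB V by auto
    then have "insert s S = S" using max SB s unfolding maximal_def by blast
    with \<open>s \<notin> S\<close> show False by blast
  qed
qed

lemma rank_factorization:
  assumes B: "B \<in> carrier_mat n nc"
  obtains M C where "M \<in> carrier_mat n (rank B)" "C \<in> carrier_mat (rank B) nc" "B = M * C"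
proof -
  obtain S where max: "maximal S (\<lambda>T. T \<subseteq> set (cols B) \<and> lin_indpt T)"
    using maximal_exists[of "\<lambda>T. T \<subseteq> set (cols B) \<and> lin_indpt T" "card (set (cols B))" "{}"]
    by (meson List.finite_set card_mono empty_iff empty_subsetI finite_lin_indpt2 rev_finite_subset)
  have SB: "S \<subseteq> set (cols B)" using max unfolding maximal_def by auto
  have SV: "S \<subseteq> carrier_vec n" using SB B cols_dim by blast
  obtain bs where bs: "set bs = S" "distinct bs"
    using finite_distinct_list[OF finite_subset[OF SB]] by blast
  define M where "M = mat_of_cols n bs"
  have M: "M \<in> carrier_mat n (rank B)"
    unfolding M_def rank_card_indpt[OF B max] using bs distinct_card by fastforce
  have cols_M: "set (cols M) = S" unfolding M_def using SV bs by simp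
  have "\<exists>c \<in> carrier_vec (rank B). col B j = M *\<^sub>v c" if "j < nc" for j
  proof -
    have "col B j \<in> span (set (cols M))"
      using cols_subset_span_maximal_lin_indpt[OF B max] that B unfolding cols_M
      by (auto simp: cols_def)
    then show ?thesis using col_space_eq[OF M] M unfolding col_space_def by (auto intro: sym)
  qed
  then obtain c where c: "\<And>j. j < nc \<Longrightarrow> c j \<in> carrier_vec (rank B) \<and> col B j = M *\<^sub>v c j"
    by metis
  define C where "C = mat_of_cols (rank B) (map c [0..<nc])"
  have C: "C \<in> carrier_mat (rank B) nc" unfolding C_def by auto
  have "B = M * C"
  proof (rule eq_matI)
    fix i j assume "i < dim_row (M * C)" and "j < dim_col (M * C)"
    then have ij: "i < n" "j < nc" using M C by auto
    then have "col C j = c j" unfolding C_def using c by auto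
    then have "(M * C) $$ (i, j) = (M *\<^sub>v c j) $ i" using ij M C by auto
    also have "\<dots> = col B j $ i" using c[OF ij(2)] by simp
    finally show "B $$ (i, j) = (M * C) $$ (i, j)" using B ij by simp
  qed (use B M C in auto)
  with M C show thesis by (rule that)
qed

lemma rank_mat_mult_le_right:
  assumes A: "A \<in> carrier_mat n n" and B: "B \<in> carrier_mat n nc"
  shows "rank (A * B) \<le> rank B"
proof -
  obtain M C where M: "M \<in> carrier_mat n (rank B)" and C: "C \<in> carrier_mat (rank B) nc"
    and "B = M * C" by (rule rank_factorization[OF B])
  then have "A * B = (A * M) * C" using A by simp
  then have "rank (A * B) \<le> rank (A * M)" using rank_mat_mult_le_left[OF _ C] A M by auto
  also have "\<dots> \<le> rank B" using rank_le_nc A M by auto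
  finally show ?thesis .
qed

lemma rank_transpose_le:
  assumes B: "B \<in> carrier_mat n n"
  shows "rank (transpose_mat B) \<le> rank B"
proof -
  obtain M C where M: "M \<in> carrier_mat n (rank B)" and C: "C \<in> carrier_mat (rank B) n"
    and "B = M * C" by (rule rank_factorization[OF B])
  then have "transpose_mat B = transpose_mat C * transpose_mat M" by (simp add: transpose_mult)
  then have "rank (transpose_mat B) \<le> rank (transpose_mat C)"
    using rank_mat_mult_le_left[of "transpose_mat C" "rank B" "transpose_mat M" n] M C by auto
  also have "\<dots> \<le> rank B" using rank_le_nc C by auto
  finally show ?thesis .
qed

lemma rank_transpose:
  assumes "B \<in> carrier_mat n n"
  shows "rank (transpose_mat B) = rank B"
  using rank_transpose_le[OF assms] rank_transpose_le[of "transpose_mat B"] assms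
  by (simp add: le_antisym)

end

text \<open>The pivot columns of the rows up to i are the unit vectors e_0, ..., e_i.\<close>

lemma (in vec_space) rank_gt_pivot_row:
  assumes R: "R \<in> carrier_mat n nc" and piv: "pivot_fun R f nc"
    and i: "i < n" and fi: "f i < nc"
  shows "i < rank R"
proof -
  note pivot = pivot_funD[OF carrier_matD(1)[OF R] piv]
  have below: "f k < nc" if "k \<le> i" for k
    using that
  proof (induction k rule: inc_induct)
    case (step k)
    then show ?case using pivot(3)[of k] i by fastforce
  qed (rule fi)
  have col_pivot: "col R (f k) = unit_vec n k" if "k \<le> i" for k
  proof (rule eq_vecI)
    fix l assume "l < dim_vec (unit_vec n k)"
    then show "col R (f k) $ l = unit_vec n k $ l"
      using pivot(4)[of k] pivot(5)[of k l] below[OF that] that i R by (auto simp: unit_vec_def)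
  qed (use R in simp)
  let ?U = "unit_vec n ` {..i} :: 'a vec set"
  have "?U \<subseteq> set (cols R)"
  proof
    fix x assume "x \<in> ?U"
    then obtain k where "k \<le> i" "x = col R (f k)" using col_pivot by auto
    then show "x \<in> set (cols R)" using below R by (simp add: cols_def)
  qed
  moreover have "lin_indpt ?U"
  proof (rule subset_li_is_li)
    show "lin_indpt (set (unit_vecs n))" using unit_vecs_basis unfolding basis_def by blast
    show "?U \<subseteq> set (unit_vecs n)" using i unfolding unit_vecs_def by auto
  qed
  ultimately have "card ?U \<le> rank R" by (rule rank_ge_card_indpt[OF R])
  moreover have "card ?U = Suc i"
    using i by (subst card_image) (auto simp: inj_on_def)
  ultimately show ?thesis by simp
qed

lemma e_mat_carrier [simp]: "e_mat n r \<in> carrier_mat n n"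
  unfolding e_mat_def by auto

lemma e_mat_mult_index:
  assumes "R \<in> carrier_mat n nc" "i < n" "j < nc"
  shows "(e_mat n r * R) $$ (i, j) = (if i < r then R $$ (i, j) else 0)"
proof -
  have "(e_mat n r * R) $$ (i, j) = (\<Sum>k<n. (if i = k \<and> i < r then 1 else 0) * R $$ (k, j))"
    using assms by (auto simp: e_mat_def scalar_prod_def intro!: sum.reindex_bij_witness[of _ id id])
  also have "\<dots> = (\<Sum>k<n. if k = i then (if i < r then R $$ (i, j) else 0) else 0)"
    by (rule sum.cong) auto
  finally show ?thesis using assms by simp
qed

lemma rank_e_mat_le: "vec_space.rank n (e_mat n r :: 'f :: field mat) \<le> r"
proof -
  let ?B = "mat n r (\<lambda>(i, j). if i = j then 1 else 0) :: 'f mat"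
  let ?C = "mat r n (\<lambda>(i, j). if i = j then 1 else 0) :: 'f mat"
  have "e_mat n r = ?B * ?C"
  proof (rule eq_matI)
    fix i j assume ij: "i < dim_row (?B * ?C)" "j < dim_col (?B * ?C)"
    have "(?B * ?C) $$ (i, j) = (\<Sum>k<r. (if i = k then 1 else 0) * (if k = j then 1 else 0))"
      using ij by (auto simp: scalar_prod_def intro!: sum.reindex_bij_witness[of _ id id])
    also have "\<dots> = (\<Sum>k<r. if k = i then (if i = j then 1 else 0) else 0)"
      by (rule sum.cong) auto
    finally show "e_mat n r $$ (i, j) = (?B * ?C) $$ (i, j)" using ij unfolding e_mat_def by auto
  qed (auto simp: e_mat_def)
  then have "vec_space.rank n (e_mat n r :: 'f mat) \<le> vec_space.rank n ?B"
    using vec_space.rank_mat_mult_le_left[of ?B n r ?C n] by auto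
  also have "\<dots> \<le> r" by (rule vec_space.rank_le_nc) auto
  finally show ?thesis .
qed

lemma (in vec_space) rank_le_invertible_factorization:
  assumes m: "m \<in> carrier_mat n n" and rk: "rank m \<le> r"
  obtains P Q R where "P \<in> carrier_mat n n" "Q \<in> carrier_mat n n" "R \<in> carrier_mat n n"
    "P * Q = 1\<^sub>m n" "Q * P = 1\<^sub>m n" "m = Q * R" "e_mat n r * R = R"
proof -
  obtain R where "gauss_jordan_single m = R" by blast
  note gauss = gauss_jordan_single[OF m this]
  from gauss(4) obtain P Q where PQ: "R = P * m" "P \<in> carrier_mat n n" "Q \<in> carrier_mat n n"
      "P * Q = 1\<^sub>m n" "Q * P = 1\<^sub>m n" by blast
  have R: "R \<in> carrier_mat n n" by (rule gauss(2))
  from gauss(3) obtain f where piv: "pivot_fun R f n"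
    using R unfolding row_echelon_form_def by auto
  have "rank R \<le> r" using rank_mat_mult_le_right[OF PQ(2) m] PQ(1) rk by simp
  then have "f i = n" if "r \<le> i" "i < n" for i
    using rank_gt_pivot_row[OF R piv that(2)] pivot_funD(1)[OF carrier_matD(1)[OF R] piv that(2)]
      that(1) by fastforce
  then have "e_mat n r * R = R"
    using pivot_funD(2)[OF carrier_matD(1)[OF R] piv] R
    by (intro eq_matI) (auto simp: e_mat_mult_index[OF R], auto simp: e_mat_def)
  moreover have "m = Q * R" using PQ m by (simp add: assoc_mult_mat[symmetric])
  ultimately show thesis using that PQ(2-5) R by blast
qed

section \<open>The monoid algebra of n x n matrices\<close>

lemma sum_fibrewise:
  assumes "finite C" and "\<And>a b. a \<in> A \<Longrightarrow> b \<in> B \<Longrightarrow> f a b \<in> C"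
  shows "(\<Sum>c\<in>C. \<Sum>a\<in>A. \<Sum>b\<in>B. if f a b = c then G a b c else (0::'a::comm_monoid_add)) =
    (\<Sum>a\<in>A. \<Sum>b\<in>B. G a b (f a b))"
proof -
  have "(\<Sum>c\<in>C. \<Sum>a\<in>A. \<Sum>b\<in>B. if f a b = c then G a b c else 0) =
      (\<Sum>a\<in>A. \<Sum>b\<in>B. \<Sum>c\<in>C. if f a b = c then G a b c else (0::'a))"
    by (subst sum.swap) (simp only: sum.swap[of _ C])
  also have "\<dots> = (\<Sum>a\<in>A. \<Sum>b\<in>B. G a b (f a b))"
    using assms by (intro sum.cong refl) simp
  finally show ?thesis .
qed

lemma finite_carrier_mat:
  assumes "finite (UNIV :: 'a set)"
  shows "finite (carrier_mat nr nc :: 'a mat set)"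
proof (rule finite_subset)
  let ?I = "{0..<nr} \<times> {0..<nc}"
  show "carrier_mat nr nc \<subseteq> mat nr nc ` (?I \<rightarrow>\<^sub>E (UNIV :: 'a set))"
  proof
    fix A :: "'a mat" assume A: "A \<in> carrier_mat nr nc"
    have "A = mat nr nc (restrict (\<lambda>ij. A $$ ij) ?I)"
      by (rule eq_matI) (use A in auto)
    then show "A \<in> mat nr nc ` (?I \<rightarrow>\<^sub>E UNIV)" by (rule image_eqI[where f = "mat nr nc"]) simp
  qed
  show "finite (mat nr nc ` (?I \<rightarrow>\<^sub>E (UNIV :: 'a set)))"
    using assms by (intro finite_imageI finite_PiE) auto
qed

lemma monalg_mult_in_monalg: "monalg_mult n u v \<in> monalg n"
  unfolding monalg_def monalg_mult_def by auto

lemma rank_ideal_subset_monalg: "v \<in> rank_ideal n r \<Longrightarrow> v \<in> monalg n"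
  unfolding rank_ideal_def by blast

lemma monalg_basis_in_rank_ideal:
  "m \<in> carrier_mat n n \<Longrightarrow> vec_space.rank n m \<le> r \<Longrightarrow> monalg_basis m \<in> rank_ideal n r"
  unfolding rank_ideal_def monalg_def monalg_basis_def by auto

definition monalg_transpose :: "('f::field mat \<Rightarrow> 'k) \<Rightarrow> 'f mat \<Rightarrow> 'k" where
  "monalg_transpose u = (\<lambda>m. u (transpose_mat m))"

lemma sum_carrier_mat_transpose:
  "(\<Sum>a\<in>carrier_mat n n. g a) = (\<Sum>a\<in>carrier_mat n n. g (transpose_mat a))"
  by (rule sum.reindex_bij_witness[of _ transpose_mat transpose_mat]) auto

lemma monalg_transpose_transpose [simp]: "monalg_transpose (monalg_transpose u) = u"
  unfolding monalg_transpose_def by simp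

lemma monalg_transpose_in_rank_ideal:
  fixes u :: "'f::field mat \<Rightarrow> 'k::field"
  assumes u: "u \<in> rank_ideal n r"
  shows "monalg_transpose u \<in> rank_ideal n r"
  unfolding rank_ideal_def monalg_def
proof (intro CollectI conjI allI impI)
  fix m :: "'f mat"
  assume "m \<notin> carrier_mat n n"
  then show "monalg_transpose u m = 0"
    using u unfolding monalg_transpose_def rank_ideal_def monalg_def by auto
next
  fix m :: "'f mat"
  assume "monalg_transpose u m \<noteq> 0"
  then have "u (transpose_mat m) \<noteq> 0" unfolding monalg_transpose_def .
  then have "transpose_mat m \<in> carrier_mat n n" "vec_space.rank n (transpose_mat m) \<le> r"
    using u unfolding rank_ideal_def monalg_def by blast+
  then show "vec_space.rank n m \<le> r"
    using vec_space.rank_transpose[of "transpose_mat m" n] by simp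
qed

text \<open>The sums defining monalg_mult are only meaningful over finite sets of matrices (a sum over
  an infinite set is 0), hence the finiteness assumption.\<close>

context
  fixes n :: nat
  assumes finite_carrier: "finite (carrier_mat n n :: 'f::field mat set)"
begin

abbreviation monalg_times :: "('f mat \<Rightarrow> 'k::field) \<Rightarrow> ('f mat \<Rightarrow> 'k) \<Rightarrow> 'f mat \<Rightarrow> 'k"
    (infixl "\<star>" 70)
  where "u \<star> v \<equiv> monalg_mult n u v"

lemma monalg_mult_eq_sum:
  "(u \<star> v) m = (\<Sum>a\<in>carrier_mat n n. \<Sum>b\<in>carrier_mat n n. if a * b = m then u a * v b else 0)"
proof (cases "m \<in> carrier_mat n n")
  case True
  let ?C = "carrier_mat n n :: 'f mat set"
  have "{(a, b). a \<in> ?C \<and> b \<in> ?C \<and> a * b = m} = {p \<in> ?C \<times> ?C. fst p * snd p = m}" by auto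
  then have "(u \<star> v) m = (\<Sum>p\<in>?C \<times> ?C. if fst p * snd p = m then u (fst p) * v (snd p) else 0)"
    unfolding monalg_mult_def using True finite_carrier by (simp add: sum.inter_filter)
  then show ?thesis by (simp add: sum.cartesian_product case_prod_beta)
next
  case False
  then show ?thesis unfolding monalg_mult_def by (auto intro!: sum.neutral)
qed

lemma monalg_mult_basis_left:
  assumes a: "a \<in> carrier_mat n n"
  shows "(monalg_basis a \<star> v) m = (\<Sum>b\<in>carrier_mat n n. if a * b = m then v b else 0)"
proof -
  have "(monalg_basis a \<star> v) m = (\<Sum>a'\<in>carrier_mat n n. if a' = a then
      (\<Sum>b\<in>carrier_mat n n. if a * b = m then v b else 0) else 0)"
    unfolding monalg_mult_eq_sum
    by (rule sum.cong) (auto simp: monalg_basis_def intro!: sum.cong)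
  then show ?thesis using finite_carrier a by simp
qed

lemma monalg_mult_basis_right:
  assumes b: "b \<in> carrier_mat n n"
  shows "(u \<star> monalg_basis b) m = (\<Sum>a\<in>carrier_mat n n. if a * b = m then u a else 0)"
proof -
  have "(u \<star> monalg_basis b) m = (\<Sum>b'\<in>carrier_mat n n. \<Sum>a\<in>carrier_mat n n.
      if a * b' = m then u a * monalg_basis b b' else 0)"
    unfolding monalg_mult_eq_sum by (rule sum.swap)
  also have "\<dots> = (\<Sum>b'\<in>carrier_mat n n. if b' = b then
      (\<Sum>a\<in>carrier_mat n n. if a * b = m then u a else 0) else 0)"
    by (rule sum.cong) (auto simp: monalg_basis_def intro!: sum.cong)
  finally show ?thesis using finite_carrier b by simp
qed

lemma monalg_basis_mult_basis:
  assumes "a \<in> carrier_mat n n" "b \<in> carrier_mat n n"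
  shows "monalg_basis a \<star> monalg_basis b = monalg_basis (a * b)"
proof
  fix m
  have "(monalg_basis a \<star> monalg_basis b) m =
      (\<Sum>b'\<in>carrier_mat n n. if b' = b then monalg_basis (a * b) m else 0)"
    unfolding monalg_mult_basis_left[OF assms(1)]
    by (rule sum.cong) (auto simp: monalg_basis_def)
  then show "(monalg_basis a \<star> monalg_basis b) m = monalg_basis (a * b) m"
    using finite_carrier assms(2) by simp
qed

lemma monalg_basis_one_mult:
  assumes "v \<in> monalg n"
  shows "monalg_basis (1\<^sub>m n) \<star> v = v"
proof
  fix m
  have "(monalg_basis (1\<^sub>m n) \<star> v) m = (\<Sum>b\<in>carrier_mat n n. if b = m then v b else 0)"
    unfolding monalg_mult_basis_left[OF one_carrier_mat] by (rule sum.cong) auto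
  then show "(monalg_basis (1\<^sub>m n) \<star> v) m = v m"
    using finite_carrier assms by (simp add: monalg_def)
qed

lemma monalg_mult_expand_right:
  "(u \<star> v) m = (\<Sum>b\<in>carrier_mat n n. v b * (u \<star> monalg_basis b) m)"
proof -
  have "(u \<star> v) m = (\<Sum>b\<in>carrier_mat n n. \<Sum>a\<in>carrier_mat n n. if a * b = m then u a * v b else 0)"
    unfolding monalg_mult_eq_sum by (rule sum.swap)
  also have "\<dots> = (\<Sum>b\<in>carrier_mat n n. v b * (u \<star> monalg_basis b) m)"
    by (intro sum.cong refl)
      (auto simp: monalg_mult_basis_right sum_distrib_left mult.commute intro!: sum.cong)
  finally show ?thesis .
qed

lemma monalg_mult_assoc: "(u \<star> v) \<star> w = u \<star> (v \<star> w)"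
proof
  fix m
  let ?C = "carrier_mat n n :: 'f mat set"
  let ?W = "\<lambda>c. \<Sum>d\<in>?C. if c * d = m then w d else 0"
  let ?V = "\<lambda>a. \<Sum>e\<in>?C. if a * e = m then (v \<star> w) e else 0"
  have "((u \<star> v) \<star> w) m = (\<Sum>c\<in>?C. (u \<star> v) c * ?W c)"
    unfolding monalg_mult_eq_sum[of "u \<star> v"] sum_distrib_left
    by (intro sum.cong refl) simp
  also have "\<dots> = (\<Sum>c\<in>?C. \<Sum>a\<in>?C. \<Sum>b\<in>?C. if a * b = c then u a * v b * ?W c else 0)"
    unfolding monalg_mult_eq_sum[of u v] sum_distrib_right by (intro sum.cong refl) simp
  also have "\<dots> = (\<Sum>a\<in>?C. \<Sum>b\<in>?C. u a * v b * ?W (a * b))"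
    by (rule sum_fibrewise[OF finite_carrier]) auto
  also have "\<dots> = (\<Sum>a\<in>?C. u a * (\<Sum>b\<in>?C. \<Sum>d\<in>?C. if a * (b * d) = m then v b * w d else 0))"
    by (intro sum.cong refl) (auto simp: sum_distrib_left intro!: sum.cong)
  also have "\<dots> = (\<Sum>a\<in>?C. u a * ?V a)"
  proof (rule sum.cong[OF refl])
    fix a assume "a \<in> ?C"
    have "?V a = (\<Sum>e\<in>?C. \<Sum>b\<in>?C. \<Sum>d\<in>?C.
        if b * d = e then (if a * e = m then v b * w d else 0) else 0)"
      unfolding monalg_mult_eq_sum[of v w] by (intro sum.cong refl) (auto intro!: sum.cong)
    also have "\<dots> = (\<Sum>b\<in>?C. \<Sum>d\<in>?C. if a * (b * d) = m then v b * w d else 0)"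
      by (rule sum_fibrewise[OF finite_carrier]) auto
    finally show "u a * (\<Sum>b\<in>?C. \<Sum>d\<in>?C. if a * (b * d) = m then v b * w d else 0) =
        u a * ?V a" by simp
  qed
  also have "\<dots> = (u \<star> (v \<star> w)) m"
    unfolding monalg_mult_eq_sum[of u "v \<star> w"] sum_distrib_left
    by (intro sum.cong refl) simp
  finally show "((u \<star> v) \<star> w) m = (u \<star> (v \<star> w)) m" .
qed

lemma monalg_mult_nonzero_factors:
  assumes "(u \<star> v) m \<noteq> 0"
  obtains a b where "a \<in> carrier_mat n n" "b \<in> carrier_mat n n" "a * b = m" "u a \<noteq> 0" "v b \<noteq> 0"
proof -
  from assms obtain a where "a \<in> carrier_mat n n"
    "(\<Sum>b\<in>carrier_mat n n. if a * b = m then u a * v b else 0) \<noteq> 0"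
    unfolding monalg_mult_eq_sum by (rule sum.not_neutral_contains_not_neutral)
  moreover from this(2) obtain b where "b \<in> carrier_mat n n"
    "(if a * b = m then u a * v b else 0) \<noteq> 0"
    by (rule sum.not_neutral_contains_not_neutral)
  ultimately show thesis using that by (simp split: if_splits)
qed

lemma monalg_mult_in_rank_ideal_left:
  assumes "v \<in> rank_ideal n r"
  shows "x \<star> v \<in> rank_ideal n r"
  unfolding rank_ideal_def
proof (intro CollectI conjI allI impI monalg_mult_in_monalg)
  fix m assume "(x \<star> v) m \<noteq> 0"
  then obtain a b where "a \<in> carrier_mat n n" "b \<in> carrier_mat n n" "a * b = m" "v b \<noteq> 0"
    by (rule monalg_mult_nonzero_factors)
  moreover have "vec_space.rank n b \<le> r" using assms \<open>v b \<noteq> 0\<close> unfolding rank_ideal_def by blast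
  ultimately show "vec_space.rank n m \<le> r"
    using vec_space.rank_mat_mult_le_right[of a n b n] by simp
qed

lemma monalg_mult_in_rank_ideal_right:
  assumes "v \<in> rank_ideal n r"
  shows "v \<star> x \<in> rank_ideal n r"
  unfolding rank_ideal_def
proof (intro CollectI conjI allI impI monalg_mult_in_monalg)
  fix m assume "(v \<star> x) m \<noteq> 0"
  then obtain a b where "a \<in> carrier_mat n n" "b \<in> carrier_mat n n" "a * b = m" "v a \<noteq> 0"
    by (rule monalg_mult_nonzero_factors)
  moreover have "vec_space.rank n a \<le> r" using assms \<open>v a \<noteq> 0\<close> unfolding rank_ideal_def by blast
  ultimately show "vec_space.rank n m \<le> r"
    using vec_space.rank_mat_mult_le_left[of a n n b n] by simp
qed

lemma monalg_transpose_mult: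
  "monalg_transpose (v \<star> w) = monalg_transpose w \<star> monalg_transpose v"
proof
  fix m
  let ?C = "carrier_mat n n :: 'f mat set"
  have "(monalg_transpose w \<star> monalg_transpose v) m =
      (\<Sum>a\<in>?C. \<Sum>b\<in>?C. if a * b = m then w (transpose_mat a) * v (transpose_mat b) else 0)"
    unfolding monalg_mult_eq_sum monalg_transpose_def ..
  also have "\<dots> = (\<Sum>a\<in>?C. \<Sum>b\<in>?C.
      if transpose_mat a * transpose_mat b = m then w a * v b else 0)"
    by (subst sum_carrier_mat_transpose, rule sum.cong[OF refl], subst sum_carrier_mat_transpose) simp
  also have "\<dots> = (\<Sum>a\<in>?C. \<Sum>b\<in>?C. if b * a = transpose_mat m then v b * w a else 0)"
    by (intro sum.cong refl) (auto simp: transpose_mult[symmetric] mult.commute)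
  also have "\<dots> = monalg_transpose (v \<star> w) m"
    unfolding monalg_mult_eq_sum monalg_transpose_def by (rule sum.swap)
  finally show "monalg_transpose (v \<star> w) m = (monalg_transpose w \<star> monalg_transpose v) m" ..
qed

section \<open>The unit of the rank ideal\<close>

lemma left_identity_if_fixes_basis:
  assumes fixes_basis: "\<And>m. m \<in> carrier_mat n n \<Longrightarrow> vec_space.rank n m \<le> r \<Longrightarrow>
      u \<star> monalg_basis m = monalg_basis m"
    and v: "v \<in> rank_ideal n r"
  shows "u \<star> v = v"
proof
  fix m
  have "(u \<star> v) m = (\<Sum>b\<in>carrier_mat n n. v b * (u \<star> monalg_basis b) m)"
    by (rule monalg_mult_expand_right)
  also have "\<dots> = (\<Sum>b\<in>carrier_mat n n. if b = m then v b else 0)"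
  proof (rule sum.cong[OF refl])
    fix b :: "'f mat" assume b: "b \<in> carrier_mat n n"
    show "v b * (u \<star> monalg_basis b) m = (if b = m then v b else 0)"
    proof (cases "v b = 0")
      case False
      then have "vec_space.rank n b \<le> r" using v unfolding rank_ideal_def by blast
      then show ?thesis using fixes_basis[OF b] by (simp add: monalg_basis_def)
    qed (simp only: mult_zero_left if_cancel)
  qed
  also have "\<dots> = v m"
    using finite_carrier rank_ideal_subset_monalg[OF v] unfolding monalg_def by auto
  finally show "(u \<star> v) m = v m" .
qed

text \<open>Transposition turns a left identity into a right identity, and the two coincide.\<close>

lemma is_unit_of_rank_ideal_if_left_identity:
  assumes u: "u \<in> rank_ideal n r" and left: "\<And>v. v \<in> rank_ideal n r \<Longrightarrow> u \<star> v = v"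
  shows "is_unit_of n (rank_ideal n r) u"
proof -
  let ?T = monalg_transpose
  have right: "v \<star> ?T u = v" if v: "v \<in> rank_ideal n r" for v
  proof -
    have "?T (v \<star> ?T u) = u \<star> ?T v" by (simp add: monalg_transpose_mult)
    also have "\<dots> = ?T v" using left monalg_transpose_in_rank_ideal[OF v] by blast
    finally have "?T (?T (v \<star> ?T u)) = ?T (?T v)" by (rule arg_cong)
    then show ?thesis by simp
  qed
  have "u = ?T u" using right[OF u] left[OF monalg_transpose_in_rank_ideal[OF u]] by simp
  with right have "v \<star> u = v" if "v \<in> rank_ideal n r" for v
    using that by simp
  with u left show ?thesis unfolding is_unit_of_def by blast
qed

text \<open>The conjugate is a left identity, and a left identity equals the right identity u.\<close>

lemma conj_invariant_if_is_unit_of_rank_ideal: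
  assumes unit: "is_unit_of n (rank_ideal n r) u"
    and g: "g \<in> carrier_mat n n" and h: "h \<in> carrier_mat n n" and "h * g = 1\<^sub>m n"
  shows "monalg_basis h \<star> u \<star> monalg_basis g = u"
proof -
  let ?w = "monalg_basis h \<star> u \<star> monalg_basis g"
  have u: "u \<in> rank_ideal n r" and u_left: "\<And>v. v \<in> rank_ideal n r \<Longrightarrow> u \<star> v = v"
    and u_right: "\<And>v. v \<in> rank_ideal n r \<Longrightarrow> v \<star> u = v"
    using unit unfolding is_unit_of_def by auto
  have w_left: "?w \<star> v = v" if v: "v \<in> rank_ideal n r" for v
  proof -
    have "?w \<star> v = monalg_basis h \<star> (u \<star> (monalg_basis g \<star> v))"
      by (simp add: monalg_mult_assoc)
    also have "\<dots> = monalg_basis h \<star> monalg_basis g \<star> v"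
      using u_left[OF monalg_mult_in_rank_ideal_left[OF v]] by (simp add: monalg_mult_assoc)
    also have "\<dots> = v"
      using monalg_basis_one_mult[OF rank_ideal_subset_monalg[OF v]] \<open>h * g = 1\<^sub>m n\<close>
      by (simp add: monalg_basis_mult_basis[OF h g])
    finally show ?thesis .
  qed
  have "?w \<in> rank_ideal n r"
    by (intro monalg_mult_in_rank_ideal_left monalg_mult_in_rank_ideal_right u)
  then have "?w = ?w \<star> u" using u_right by simp
  also have "\<dots> = u" using w_left[OF u] .
  finally show ?thesis .
qed

lemma fixes_basis_if_conj_invariant:
  assumes u: "u \<in> monalg n"
    and conj: "\<And>g h. g \<in> carrier_mat n n \<Longrightarrow> h \<in> carrier_mat n n \<Longrightarrow>
      g * h = 1\<^sub>m n \<Longrightarrow> h * g = 1\<^sub>m n \<Longrightarrow> monalg_basis h \<star> u \<star> monalg_basis g = u"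
    and fixes_e: "u \<star> monalg_basis (e_mat n r) = monalg_basis (e_mat n r)"
    and m: "m \<in> carrier_mat n n" and rank_m: "vec_space.rank n m \<le> r"
  shows "u \<star> monalg_basis m = monalg_basis m"
proof -
  obtain P Q R where P: "P \<in> carrier_mat n n" and Q: "Q \<in> carrier_mat n n"
    and R: "R \<in> carrier_mat n n" and PQ: "P * Q = 1\<^sub>m n" "Q * P = 1\<^sub>m n"
    and m_QR: "m = Q * R" and eR: "e_mat n r * R = R"
    by (rule vec_space.rank_le_invertible_factorization[OF m rank_m])
  have commute: "u \<star> monalg_basis Q = monalg_basis Q \<star> u"
  proof -
    have "monalg_basis Q \<star> u = monalg_basis Q \<star> (monalg_basis P \<star> u \<star> monalg_basis Q)"
      using conj[OF Q P PQ(2,1)] by simp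
    also have "\<dots> = monalg_basis (Q * P) \<star> u \<star> monalg_basis Q"
      by (simp add: monalg_mult_assoc monalg_basis_mult_basis[OF Q P, symmetric])
    also have "\<dots> = u \<star> monalg_basis Q" using PQ(2) monalg_basis_one_mult[OF u] by simp
    finally show ?thesis ..
  qed
  have fixes_R: "u \<star> monalg_basis R = monalg_basis R"
  proof -
    have "u \<star> monalg_basis R = u \<star> monalg_basis (e_mat n r) \<star> monalg_basis R"
      by (simp add: monalg_mult_assoc monalg_basis_mult_basis[OF e_mat_carrier R] eR)
    also have "\<dots> = monalg_basis R"
      by (simp add: fixes_e monalg_basis_mult_basis[OF e_mat_carrier R] eR)
    finally show ?thesis .
  qed
  have "u \<star> monalg_basis m = u \<star> monalg_basis Q \<star> monalg_basis R"
    by (simp add: m_QR monalg_mult_assoc monalg_basis_mult_basis[OF Q R])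
  also have "\<dots> = monalg_basis Q \<star> (u \<star> monalg_basis R)"
    by (simp only: commute monalg_mult_assoc)
  also have "\<dots> = monalg_basis m"
    by (simp only: fixes_R m_QR monalg_basis_mult_basis[OF Q R])
  finally show ?thesis .
qed

lemma is_unit_of_rank_ideal_if_conj_invariant:
  fixes u :: "'f mat \<Rightarrow> 'k::field"
  assumes u: "u \<in> rank_ideal n r"
    and conj: "\<And>g h. g \<in> carrier_mat n n \<Longrightarrow> h \<in> carrier_mat n n \<Longrightarrow>
      g * h = 1\<^sub>m n \<Longrightarrow> h * g = 1\<^sub>m n \<Longrightarrow> monalg_basis h \<star> u \<star> monalg_basis g = u"
    and fixes_e: "u \<star> monalg_basis (e_mat n r) = monalg_basis (e_mat n r)"
  shows "is_unit_of n (rank_ideal n r) u"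
proof (rule is_unit_of_rank_ideal_if_left_identity[OF u])
  fix v :: "'f mat \<Rightarrow> 'k" assume "v \<in> rank_ideal n r"
  with fixes_basis_if_conj_invariant[OF rank_ideal_subset_monalg[OF u] conj fixes_e]
  show "u \<star> v = v" by (rule left_identity_if_fixes_basis)
qed

end

theorem lemma4p4:
  fixes u :: "'f::field mat \<Rightarrow> 'k::field" and n r :: nat
  assumes "finite (UNIV :: 'f set)"
    and "(of_nat (card (UNIV :: 'f set)) :: 'k) \<noteq> 0"
    and "r \<le> n"
    and "u \<in> rank_ideal n r"
  shows "is_unit_of n (rank_ideal n r) u \<longleftrightarrow>
    ((\<forall>g\<in>carrier_mat n n. \<forall>h\<in>carrier_mat n n. g * h = 1\<^sub>m n \<and> h * g = 1\<^sub>m n \<longrightarrow>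
        monalg_mult n (monalg_mult n (monalg_basis h) u) (monalg_basis g) = u)
     \<and> monalg_mult n u (monalg_basis (e_mat n r)) = monalg_basis (e_mat n r))"
proof -
  have fin: "finite (carrier_mat n n :: 'f mat set)" by (rule finite_carrier_mat[OF assms(1)])
  have e: "monalg_basis (e_mat n r) \<in> rank_ideal n r"
    by (rule monalg_basis_in_rank_ideal[OF e_mat_carrier rank_e_mat_le])
  show ?thesis
    using conj_invariant_if_is_unit_of_rank_ideal[OF fin]
      is_unit_of_rank_ideal_if_conj_invariant[OF fin assms(4)] e
    unfolding is_unit_of_def by blast
qed

end
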